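(* The distribution $P_{ABC}$ on $\{0,1\}^3$ given by $P_{ABC}(abc)=1/3$ if $a+b+c=1$ and $0$ otherwise is not compatible with the Triangle scenario.
   Context: The Triangle scenario is the causal structure with observed nodes $A,B,C$, latent nodes $X,Y,Z$ and edges $X\to A$, $X\to B$, $Y\to A$, $Y\to C$, $Z\to B$, $Z\to C$. A distribution $P_{ABC}$ is compatible with it if there exist distributions $P_X,P_Y,P_Z$ (latent variables of arbitrary cardinality) and conditionals $P_{A|XY},P_{B|XZ},P_{C|YZ}$ such that $P_{ABC}$ is the marginal of $P_XP_YP_ZP_{A|XY}P_{B|XZ}P_{C|YZ}$. *)

theory Defs
  imports "HOL-Probability.Probability"
begin

text \<open>Outcomes of the observed variables A, B, C are bits, encoded as bool (True = 1).
  Latent variables X, Y, Z live in arbitrary measurable spaces (arbitrary types, hence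
  arbitrary cardinality) with probability measures MX, MY, MZ.\<close>

definition bit_kernel :: "('u \<times> 'v) measure \<Rightarrow> ('u \<Rightarrow> 'v \<Rightarrow> bool \<Rightarrow> real) \<Rightarrow> bool" where
  "bit_kernel M k \<longleftrightarrow>
     (\<forall>a. (\<lambda>(u,v). k u v a) \<in> borel_measurable M) \<and>
     (\<forall>u v a. 0 \<le> k u v a) \<and>
     (\<forall>u v. k u v False + k u v True = 1)"

definition triangle_model ::
  "'x measure \<Rightarrow> 'y measure \<Rightarrow> 'z measure \<Rightarrow>
   ('x \<Rightarrow> 'y \<Rightarrow> bool \<Rightarrow> real) \<Rightarrow> ('x \<Rightarrow> 'z \<Rightarrow> bool \<Rightarrow> real) \<Rightarrow> ('y \<Rightarrow> 'z \<Rightarrow> bool \<Rightarrow> real) \<Rightarrow>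
   (bool \<Rightarrow> bool \<Rightarrow> bool \<Rightarrow> real) \<Rightarrow> bool" where
  "triangle_model MX MY MZ pA pB pC P \<longleftrightarrow>
     prob_space MX \<and> prob_space MY \<and> prob_space MZ \<and>
     bit_kernel (MX \<Otimes>\<^sub>M MY) pA \<and>
     bit_kernel (MX \<Otimes>\<^sub>M MZ) pB \<and>
     bit_kernel (MY \<Otimes>\<^sub>M MZ) pC \<and>
     (\<forall>a b c. P a b c =
        (\<integral>w. (case w of (x, y, z) \<Rightarrow> pA x y a * pB x z b * pC y z c)
           \<partial>(MX \<Otimes>\<^sub>M (MY \<Otimes>\<^sub>M MZ))))"

text \<open>Since
  latent spaces are types, the existential over them is expressed by the negated
  statement being universally quantified over the type variables.\<close>

definition W_dist :: "bool \<Rightarrow> bool \<Rightarrow> bool \<Rightarrow> real" where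
  "W_dist a b c = (if of_bool a + of_bool b + of_bool c = (1::nat) then 1/3 else 0)"

end

theory Submission
  imports Defs
begin

text \<open>Let \<open>a(x,y), b(x,z), c(y,z)\<close> be the probabilities that A, B, C output 1, and let
  \<open>\<alpha>(x), \<beta>(z), \<gamma>(y)\<close> be \<open>a, b, c\<close> averaged over their second latent argument.  For numbers
  in [0,1] one has \<open>\<alpha>\<gamma>\<beta> \<le> (1-a)(1-b)(1-c) + a\<gamma> + \<alpha>b + \<beta>c\<close>.  Integrating over the latent
  variables, the left side factorises into \<open>P(A=1) P(B=1) P(C=1)\<close>, while averaging out one
  latent variable in each correlation term turns the right side into
  \<open>P(000) + P(A=1,C=1) + P(A=1,B=1) + P(B=1,C=1)\<close>.  For the W distribution the left side
  is \<open>1/27\<close> and the right side is \<open>0\<close>.\<close>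

lemma (in prob_space) integral_unit_interval:
  fixes f :: "'a \<Rightarrow> real"
  assumes "\<And>x. 0 \<le> f x" and "\<And>x. f x \<le> 1"
  shows "0 \<le> integral\<^sup>L M f" and "integral\<^sup>L M f \<le> 1"
proof -
  show "0 \<le> integral\<^sup>L M f" using assms(1) by simp
  show "integral\<^sup>L M f \<le> 1"
  proof (cases "integrable M f")
    case True
    then show ?thesis using assms(2) by (intro integral_le_const) auto
  qed (simp add: not_integrable_integral_eq)
qed

locale sigma_finite_measure3 =
  X: sigma_finite_measure MX + Y: sigma_finite_measure MY + Z: sigma_finite_measure MZ
  for MX :: "'x measure" and MY :: "'y measure" and MZ :: "'z measure"
begin

sublocale YZ: pair_sigma_finite MY MZ ..

sublocale XYZ: pair_sigma_finite MX "MY \<Otimes>\<^sub>M MZ" ..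

lemma integral_prod3_xyz:
  fixes f :: "'x \<times> 'y \<times> 'z \<Rightarrow> real"
  assumes f: "integrable (MX \<Otimes>\<^sub>M (MY \<Otimes>\<^sub>M MZ)) f"
  shows "integral\<^sup>L (MX \<Otimes>\<^sub>M (MY \<Otimes>\<^sub>M MZ)) f = (\<integral>x. \<integral>y. \<integral>z. f (x, y, z) \<partial>MZ \<partial>MY \<partial>MX)"
proof -
  have [measurable]: "f \<in> borel_measurable (MX \<Otimes>\<^sub>M (MY \<Otimes>\<^sub>M MZ))"
    using f by (rule borel_measurable_integrable)
  have "integral\<^sup>L (MX \<Otimes>\<^sub>M (MY \<Otimes>\<^sub>M MZ)) f = (\<integral>x. \<integral>w. f (x, w) \<partial>(MY \<Otimes>\<^sub>M MZ) \<partial>MX)"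
    using XYZ.integral_fst'[OF f] ..
  also have "\<dots> = (\<integral>x. \<integral>y. \<integral>z. f (x, y, z) \<partial>MZ \<partial>MY \<partial>MX)"
    using XYZ.AE_integrable_fst'[OF f]
    by (intro integral_cong_AE) (auto simp: YZ.integral_fst'[symmetric] elim!: AE_mp)
  finally show ?thesis .
qed

lemma integral_prod3_yzx:
  fixes f :: "'x \<times> 'y \<times> 'z \<Rightarrow> real"
  assumes f: "integrable (MX \<Otimes>\<^sub>M (MY \<Otimes>\<^sub>M MZ)) f"
  shows "integral\<^sup>L (MX \<Otimes>\<^sub>M (MY \<Otimes>\<^sub>M MZ)) f = (\<integral>y. \<integral>z. \<integral>x. f (x, y, z) \<partial>MX \<partial>MZ \<partial>MY)"
proof -
  have f': "integrable (MX \<Otimes>\<^sub>M (MY \<Otimes>\<^sub>M MZ)) (\<lambda>(x, w). f (x, w))"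
    using f by simp
  have "integral\<^sup>L (MX \<Otimes>\<^sub>M (MY \<Otimes>\<^sub>M MZ)) f = (\<integral>w. \<integral>x. f (x, w) \<partial>MX \<partial>(MY \<Otimes>\<^sub>M MZ))"
    using XYZ.integral_snd[OF f'] by simp
  also have "\<dots> = (\<integral>y. \<integral>z. \<integral>x. f (x, y, z) \<partial>MX \<partial>MZ \<partial>MY)"
    using YZ.integral_fst'[OF XYZ.integrable_snd[OF f']] by simp
  finally show ?thesis .
qed

end

lemma bit_kernel_bounds:
  assumes "bit_kernel M k"
  shows "0 \<le> k u v a" and "k u v a \<le> 1"
  using assms unfolding bit_kernel_def by (smt (verit))+

lemma bit_kernel_False:
  assumes "bit_kernel M k"
  shows "k u v False = 1 - k u v True"
  using assms unfolding bit_kernel_def by (smt (verit))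

lemma bit_kernel_sum:
  assumes "bit_kernel M k"
  shows "(\<Sum>a\<in>UNIV. k u v a) = 1"
  using assms unfolding bit_kernel_def by (simp add: UNIV_bool)

lemma bit_kernel_measurable:
  assumes "bit_kernel M k"
  shows "(\<lambda>(u, v). k u v a) \<in> borel_measurable M"
  using assms unfolding bit_kernel_def by auto

lemma triangle_pointwise_bound:
  fixes a b c p q r :: real
  assumes "0 \<le> a" "a \<le> 1" "0 \<le> b" "b \<le> 1" "0 \<le> c" "c \<le> 1"
    and "0 \<le> p" "p \<le> 1" "0 \<le> q" "q \<le> 1" "0 \<le> r" "r \<le> 1"
  shows "p * q * r \<le> (1 - a) * (1 - b) * (1 - c) + a * q + p * b + r * c"
proof -
  have "a * b * c \<le> a * b"
    using assms by (simp add: mult_left_le)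
  then have one_le: "1 \<le> (1 - a) * (1 - b) * (1 - c) + a + b + c"
    using assms by (simp add: algebra_simps) (smt (verit) mult_nonneg_nonneg)
  have "p * q * r \<le> p * q * r * ((1 - a) * (1 - b) * (1 - c) + a + b + c)"
    using mult_left_mono[OF one_le] assms by simp
  also have "\<dots> = (p * q * r) * ((1 - a) * (1 - b) * (1 - c)) + (p * r) * (a * q)
      + (q * r) * (p * b) + (p * q) * (r * c)"
    by (simp add: algebra_simps)
  also have "\<dots> \<le> (1 - a) * (1 - b) * (1 - c) + a * q + p * b + r * c"
    using assms by (intro add_mono mult_left_le_one_le) (auto intro: mult_le_one)
  finally show ?thesis .
qed

locale triangle_scenario =
  X: prob_space MX + Y: prob_space MY + Z: prob_space MZ
  for MX :: "'x measure" and MY :: "'y measure" and MZ :: "'z measure" +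
  fixes pA :: "'x \<Rightarrow> 'y \<Rightarrow> bool \<Rightarrow> real"
    and pB :: "'x \<Rightarrow> 'z \<Rightarrow> bool \<Rightarrow> real"
    and pC :: "'y \<Rightarrow> 'z \<Rightarrow> bool \<Rightarrow> real"
  assumes kernel_A: "bit_kernel (MX \<Otimes>\<^sub>M MY) pA"
    and kernel_B: "bit_kernel (MX \<Otimes>\<^sub>M MZ) pB"
    and kernel_C: "bit_kernel (MY \<Otimes>\<^sub>M MZ) pC"
begin

sublocale sigma_finite_measure3 MX MY MZ ..

abbreviation latent :: "('x \<times> 'y \<times> 'z) measure" where
  "latent \<equiv> MX \<Otimes>\<^sub>M (MY \<Otimes>\<^sub>M MZ)"

declare X.prob_space [simp] Y.prob_space [simp] Z.prob_space [simp]

sublocale latent: prob_space latent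
  by (intro prob_space_pair X.prob_space_axioms Y.prob_space_axioms Z.prob_space_axioms)

definition observed :: "bool \<Rightarrow> bool \<Rightarrow> bool \<Rightarrow> real" where
  "observed a b c = (\<integral>w. (case w of (x, y, z) \<Rightarrow> pA x y a * pB x z b * pC y z c) \<partial>latent)"

lemmas kernel_bounds = bit_kernel_bounds[OF kernel_A] bit_kernel_bounds[OF kernel_B]
  bit_kernel_bounds[OF kernel_C]

lemmas kernel_sums = bit_kernel_sum[OF kernel_A] bit_kernel_sum[OF kernel_B]
  bit_kernel_sum[OF kernel_C]

lemmas kernel_False = bit_kernel_False[OF kernel_A] bit_kernel_False[OF kernel_B]
  bit_kernel_False[OF kernel_C]

lemma measurable_kernels [measurable]:
  "(\<lambda>w. pA (fst w) (fst (snd w)) a) \<in> borel_measurable latent"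
  "(\<lambda>w. pB (fst w) (snd (snd w)) b) \<in> borel_measurable latent"
  "(\<lambda>w. pC (fst (snd w)) (snd (snd w)) c) \<in> borel_measurable latent"
proof -
  have "(\<lambda>w. (fst w, fst (snd w))) \<in> latent \<rightarrow>\<^sub>M MX \<Otimes>\<^sub>M MY"
    and "(\<lambda>w. (fst w, snd (snd w))) \<in> latent \<rightarrow>\<^sub>M MX \<Otimes>\<^sub>M MZ"
    and "snd \<in> latent \<rightarrow>\<^sub>M MY \<Otimes>\<^sub>M MZ"
    by measurable
  from measurable_compose[OF this(1) bit_kernel_measurable[OF kernel_A]]
    measurable_compose[OF this(2) bit_kernel_measurable[OF kernel_B]]
    measurable_compose[OF this(3) bit_kernel_measurable[OF kernel_C]]
  show "(\<lambda>w. pA (fst w) (fst (snd w)) a) \<in> borel_measurable latent"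
    "(\<lambda>w. pB (fst w) (snd (snd w)) b) \<in> borel_measurable latent"
    "(\<lambda>w. pC (fst (snd w)) (snd (snd w)) c) \<in> borel_measurable latent"
    by (simp_all add: split_beta')
qed

lemma integrable_unit_interval:
  fixes f :: "'x \<times> 'y \<times> 'z \<Rightarrow> real"
  assumes "f \<in> borel_measurable latent" "\<And>w. 0 \<le> f w" "\<And>w. f w \<le> 1"
  shows "integrable latent f"
  using assms by (intro latent.integrable_const_bound[where B = 1]) auto

lemma integrable_observed_term:
  "integrable latent (\<lambda>(x, y, z). pA x y a * pB x z b * pC y z c)"
  by (rule integrable_unit_interval)
    (auto intro!: mult_le_one mult_nonneg_nonneg kernel_bounds)

lemma observed_sum:
  "(\<Sum>a\<in>SA. \<Sum>b\<in>SB. \<Sum>c\<in>SC. observed a b c) =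
     (\<integral>(x, y, z). (\<Sum>a\<in>SA. pA x y a) * (\<Sum>b\<in>SB. pB x z b) * (\<Sum>c\<in>SC. pC y z c) \<partial>latent)"
proof -
  have "(\<lambda>(x, y, z). (\<Sum>a\<in>SA. pA x y a) * (\<Sum>b\<in>SB. pB x z b) * (\<Sum>c\<in>SC. pC y z c)) =
      (\<lambda>w. \<Sum>a\<in>SA. \<Sum>b\<in>SB. \<Sum>c\<in>SC. (case w of (x, y, z) \<Rightarrow> pA x y a * pB x z b * pC y z c))"
    by (auto simp: fun_eq_iff mult.assoc simp flip: sum_distrib_left sum_distrib_right)
  then show ?thesis
    by (simp add: observed_def integrable_observed_term)
qed

lemma integral_latent_iterated:
  fixes f :: "'x \<times> 'y \<times> 'z \<Rightarrow> real"
  assumes "f \<in> borel_measurable latent" "\<And>w. 0 \<le> f w" "\<And>w. f w \<le> 1"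
  shows "integral\<^sup>L latent f = (\<integral>x. \<integral>y. \<integral>z. f (x, y, z) \<partial>MZ \<partial>MY \<partial>MX)"
    and "integral\<^sup>L latent f = (\<integral>y. \<integral>z. \<integral>x. f (x, y, z) \<partial>MX \<partial>MZ \<partial>MY)"
  using integrable_unit_interval[OF assms] by (rule integral_prod3_xyz, rule integral_prod3_yzx)

definition avgA :: "'x \<Rightarrow> real" where
  "avgA x = (\<integral>y. pA x y True \<partial>MY)"

definition avgB :: "'z \<Rightarrow> real" where
  "avgB z = (\<integral>x. pB x z True \<partial>MX)"

definition avgC :: "'y \<Rightarrow> real" where
  "avgC y = (\<integral>z. pC y z True \<partial>MZ)"

lemma measurable_avg [measurable]:
  "avgA \<in> borel_measurable MX" "avgB \<in> borel_measurable MZ" "avgC \<in> borel_measurable MY"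
proof -
  note [measurable] = bit_kernel_measurable[OF kernel_A] bit_kernel_measurable[OF kernel_B]
    bit_kernel_measurable[OF kernel_C]
  show "avgA \<in> borel_measurable MX" "avgB \<in> borel_measurable MZ" "avgC \<in> borel_measurable MY"
    unfolding avgA_def[abs_def] avgB_def[abs_def] avgC_def[abs_def] by measurable
qed

lemma avg_bounds:
  "0 \<le> avgA x" "avgA x \<le> 1" "0 \<le> avgB z" "avgB z \<le> 1" "0 \<le> avgC y" "avgC y \<le> 1"
  unfolding avgA_def avgB_def avgC_def
  by (intro X.integral_unit_interval Y.integral_unit_interval Z.integral_unit_interval kernel_bounds)+

lemma integral_avgA: "integral\<^sup>L MX avgA = (\<integral>(x, y, z). pA x y True \<partial>latent)"
  by (subst integral_latent_iterated(1)) (auto simp: kernel_bounds avgA_def[abs_def])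

lemma integral_avgB: "integral\<^sup>L MZ avgB = (\<integral>(x, y, z). pB x z True \<partial>latent)"
  by (subst integral_latent_iterated(2)) (auto simp: kernel_bounds avgB_def[abs_def])

lemma integral_avgC: "integral\<^sup>L MY avgC = (\<integral>(x, y, z). pC y z True \<partial>latent)"
  by (subst integral_latent_iterated(1)) (auto simp: kernel_bounds avgC_def[abs_def])

lemma integral_avgC_A:
  "(\<integral>(x, y, z). pA x y True * avgC y \<partial>latent) = (\<integral>(x, y, z). pA x y True * pC y z True \<partial>latent)"
proof -
  have "(\<integral>(x, y, z). pA x y True * avgC y \<partial>latent) = (\<integral>x. \<integral>y. pA x y True * avgC y \<partial>MY \<partial>MX)"
    by (subst integral_latent_iterated(1)) (auto simp: kernel_bounds avg_bounds mult_le_one)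
  also have "\<dots> = (\<integral>(x, y, z). pA x y True * pC y z True \<partial>latent)"
    by (subst integral_latent_iterated(1)) (auto simp: kernel_bounds mult_le_one avgC_def)
  finally show ?thesis .
qed

lemma integral_avgA_B:
  "(\<integral>(x, y, z). avgA x * pB x z True \<partial>latent) = (\<integral>(x, y, z). pA x y True * pB x z True \<partial>latent)"
proof -
  have "(\<integral>(x, y, z). avgA x * pB x z True \<partial>latent) = (\<integral>x. \<integral>z. avgA x * pB x z True \<partial>MZ \<partial>MX)"
    by (subst integral_latent_iterated(1)) (auto simp: kernel_bounds avg_bounds mult_le_one)
  also have "\<dots> = (\<integral>(x, y, z). pA x y True * pB x z True \<partial>latent)"
    by (subst integral_latent_iterated(1)) (auto simp: kernel_bounds mult_le_one avgA_def)
  finally show ?thesis .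
qed

lemma integral_avgB_C:
  "(\<integral>(x, y, z). avgB z * pC y z True \<partial>latent) = (\<integral>(x, y, z). pB x z True * pC y z True \<partial>latent)"
proof -
  have "(\<integral>(x, y, z). avgB z * pC y z True \<partial>latent) = (\<integral>y. \<integral>z. avgB z * pC y z True \<partial>MZ \<partial>MY)"
    by (subst integral_latent_iterated(2)) (auto simp: kernel_bounds avg_bounds mult_le_one)
  also have "\<dots> = (\<integral>(x, y, z). pB x z True * pC y z True \<partial>latent)"
    by (subst integral_latent_iterated(2)) (auto simp: kernel_bounds mult_le_one avgB_def)
  finally show ?thesis .
qed

lemma integral_avg_product:
  "(\<integral>(x, y, z). avgA x * avgC y * avgB z \<partial>latent) = integral\<^sup>L MX avgA * integral\<^sup>L MY avgC * integral\<^sup>L MZ avgB"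
  by (subst integral_latent_iterated(1)) (auto simp: avg_bounds mult_le_one)

theorem triangle_inequality:
  "(\<Sum>b\<in>UNIV. \<Sum>c\<in>UNIV. observed True b c) * (\<Sum>a\<in>UNIV. \<Sum>c\<in>UNIV. observed a True c) *
     (\<Sum>a\<in>UNIV. \<Sum>b\<in>UNIV. observed a b True)
   \<le> observed False False False + (\<Sum>b\<in>UNIV. observed True b True) +
     (\<Sum>c\<in>UNIV. observed True True c) + (\<Sum>a\<in>UNIV. observed a True True)"
proof -
  have "(\<Sum>b\<in>UNIV. \<Sum>c\<in>UNIV. observed True b c) * (\<Sum>a\<in>UNIV. \<Sum>c\<in>UNIV. observed a True c) *
      (\<Sum>a\<in>UNIV. \<Sum>b\<in>UNIV. observed a b True)
      = integral\<^sup>L MX avgA * integral\<^sup>L MY avgC * integral\<^sup>L MZ avgB"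
    using observed_sum[of "{True}" UNIV UNIV] observed_sum[of UNIV "{True}" UNIV]
      observed_sum[of UNIV UNIV "{True}"]
    by (simp add: kernel_sums integral_avgA integral_avgB integral_avgC)
  also have "\<dots> = (\<integral>(x, y, z). avgA x * avgC y * avgB z \<partial>latent)"
    by (rule integral_avg_product[symmetric])
  also have "\<dots> \<le> (\<integral>(x, y, z). (1 - pA x y True) * (1 - pB x z True) * (1 - pC y z True) +
      pA x y True * avgC y + avgA x * pB x z True + avgB z * pC y z True \<partial>latent)"
    by (unfold split_beta', rule integral_mono)
      (auto simp: kernel_bounds avg_bounds mult_le_one
        intro!: Bochner_Integration.integrable_add triangle_pointwise_bound intro: integrable_unit_interval)
  also have "\<dots> = (\<integral>(x, y, z). (1 - pA x y True) * (1 - pB x z True) * (1 - pC y z True) \<partial>latent) +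
      (\<integral>(x, y, z). pA x y True * avgC y \<partial>latent) + (\<integral>(x, y, z). avgA x * pB x z True \<partial>latent) +
      (\<integral>(x, y, z). avgB z * pC y z True \<partial>latent)"
    by (simp add: split_beta' kernel_bounds avg_bounds mult_le_one integrable_unit_interval)
  also have "\<dots> = observed False False False + (\<Sum>b\<in>UNIV. observed True b True) +
      (\<Sum>c\<in>UNIV. observed True True c) + (\<Sum>a\<in>UNIV. observed a True True)"
    using observed_sum[of "{True}" UNIV "{True}"] observed_sum[of "{True}" "{True}" UNIV]
      observed_sum[of UNIV "{True}" "{True}"]
    by (simp add: observed_def kernel_sums kernel_False integral_avgC_A integral_avgA_B integral_avgB_C)
  finally show ?thesis .
qed

end

lemma triangle_model_iff:
  "triangle_model MX MY MZ pA pB pC P \<longleftrightarrow>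
     triangle_scenario MX MY MZ pA pB pC \<and> P = triangle_scenario.observed MX MY MZ pA pB pC"
  by (auto simp: triangle_model_def triangle_scenario_def triangle_scenario_axioms_def
      triangle_scenario.observed_def fun_eq_iff)

theorem mainTheorem9:
  fixes MX :: "'x measure" and MY :: "'y measure" and MZ :: "'z measure"
    and pA :: "'x \<Rightarrow> 'y \<Rightarrow> bool \<Rightarrow> real"
    and pB :: "'x \<Rightarrow> 'z \<Rightarrow> bool \<Rightarrow> real"
    and pC :: "'y \<Rightarrow> 'z \<Rightarrow> bool \<Rightarrow> real"
  shows "\<not> triangle_model MX MY MZ pA pB pC W_dist"
proof
  assume "triangle_model MX MY MZ pA pB pC W_dist"
  then have scenario: "triangle_scenario MX MY MZ pA pB pC"
    and W_observed: "W_dist = triangle_scenario.observed MX MY MZ pA pB pC"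
    by (simp_all add: triangle_model_iff)
  interpret triangle_scenario MX MY MZ pA pB pC
    by (fact scenario)
  show False
    using triangle_inequality by (simp add: W_observed[symmetric] UNIV_bool W_dist_def)
qed

end
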